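(* Let $m_1,m_2\ge1$ and $\mathbf{Y}\sim\mathcal{SUT}_{d,m_1+m_2}(\boldsymbol{\xi},\boldsymbol{\Omega},\boldsymbol{\Delta},\boldsymbol{\tau},\bar{\boldsymbol{\Gamma}},\nu)$ with $\boldsymbol{\Delta}=(\mathbf{0},\boldsymbol{\Delta}_2)$ where $\mathbf{0}$ is $d\times m_1$ and $\boldsymbol{\Delta}_2$ is $d\times m_2$, $\boldsymbol{\tau}=(\mathbf{0}^\top,\boldsymbol{\tau}_2^\top)^\top$ with $\boldsymbol{\tau}_2\in\mathbb{R}^{m_2}$, and $\bar{\boldsymbol{\Gamma}}=\mathrm{diag}(\bar{\boldsymbol{\Gamma}}_{11},\bar{\boldsymbol{\Gamma}}_{22})$ with $\bar{\boldsymbol{\Gamma}}_{ii}$ of size $m_i\times m_i$. Then $\mathbf{Y}\sim\mathcal{SUT}_{d,m_2}(\boldsymbol{\xi},\boldsymbol{\Omega},\boldsymbol{\Delta}_2,\boldsymbol{\tau}_2,\bar{\boldsymbol{\Gamma}}_{22},\nu)$.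
   Context: Notation: $\mathcal{T}_k(\boldsymbol{\mu},\boldsymbol{\Sigma},\nu)$ is the $k$-dimensional Student $t$ distribution with location $\boldsymbol{\mu}$, dispersion $\boldsymbol{\Sigma}$ and $\nu>0$ degrees of freedom. For dimension $d$ and latent dimension $m$: parameters are $\boldsymbol{\xi}\in\mathbb{R}^d$; $\boldsymbol{\Omega}$ a $d\times d$ positive definite matrix, $\boldsymbol{\omega}=\mathrm{diag}(\boldsymbol{\Omega})^{1/2}$, $\bar{\boldsymbol{\Omega}}=\boldsymbol{\omega}^{-1}\boldsymbol{\Omega}\boldsymbol{\omega}^{-1}$; $\boldsymbol{\Delta}$ a $d\times m$ matrix; $\bar{\boldsymbol{\Gamma}}$ an $m\times m$ correlation matrix; $\boldsymbol{\tau}\in\mathbb{R}^m$; $\nu>0$; with $\bar{\boldsymbol{\Omega}}^*=\begin{pmatrix}\bar{\boldsymbol{\Gamma}}&\boldsymbol{\Delta}^\top\\ \boldsymbol{\Delta}&\bar{\boldsymbol{\Omega}}\end{pmatrix}$ positive definite. If $(\mathbf{U}_0^\top,\mathbf{U}_1^\top)^\top\sim\mathcal{T}_{m+d}(\mathbf{0},\bar{\boldsymbol{\Omega}}^*,\nu)$ ($\mathbf{U}_0\in\mathbb{R}^m$, $\mathbf{U}_1\in\mathbb{R}^d$) and $\mathbf{Z}$ has the conditional distribution of $\mathbf{U}_1$ given $\mathbf{U}_0+\boldsymbol{\tau}>\mathbf{0}$ (componentwise), then $\mathbf{Y}=\boldsymbol{\xi}+\boldsymbol{\omega}\mathbf{Z}$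 has distribution $\mathcal{SUT}_{d,m}(\boldsymbol{\xi},\boldsymbol{\Omega},\boldsymbol{\Delta},\boldsymbol{\tau},\bar{\boldsymbol{\Gamma}},\nu)$. *)

theory Defs
  imports "HOL-Probability.Probability"
begin

text \<open>Matrices are Isabelle's row-major vectors of vectors: a real^c^r matrix has rows
indexed by 'r and columns indexed by 'c.  Dimensions are finite index types.\<close>

definition sym_mat :: "real^'n^'n \<Rightarrow> bool" where
  "sym_mat A \<longleftrightarrow> transpose A = A"

definition pos_def_mat :: "real^'n^'n \<Rightarrow> bool" where
  "pos_def_mat A \<longleftrightarrow> sym_mat A \<and> (\<forall>x. x \<noteq> 0 \<longrightarrow> x \<bullet> (A *v x) > 0)"

definition corr_mat :: "real^'n^'n \<Rightarrow> bool" where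
  "corr_mat A \<longleftrightarrow> sym_mat A \<and> (\<forall>x. x \<bullet> (A *v x) \<ge> 0) \<and> (\<forall>i. A $ i $ i = 1)"

definition mvt_pdf :: "real^'k \<Rightarrow> real^'k^'k \<Rightarrow> real \<Rightarrow> real^'k \<Rightarrow> real" where
  "mvt_pdf \<mu> \<Sigma> \<nu> x =
     Gamma ((\<nu> + real CARD('k)) / 2)
     / (Gamma (\<nu> / 2) * (\<nu> * pi) powr (real CARD('k) / 2) * sqrt (det \<Sigma>))
     * (1 + ((x - \<mu>) \<bullet> (matrix_inv \<Sigma> *v (x - \<mu>))) / \<nu>) powr (- (\<nu> + real CARD('k)) / 2)"

definition mvt :: "real^'k \<Rightarrow> real^'k^'k \<Rightarrow> real \<Rightarrow> (real^'k) measure" where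
  "mvt \<mu> \<Sigma> \<nu> = density lborel (\<lambda>x. ennreal (mvt_pdf \<mu> \<Sigma> \<nu> x))"

definition scale_vec :: "real^'d^'d \<Rightarrow> real^'d" where
  "scale_vec \<Omega> = (\<chi> i. sqrt (\<Omega> $ i $ i))"

definition Omega_bar :: "real^'d^'d \<Rightarrow> real^'d^'d" where
  "Omega_bar \<Omega> = (\<chi> i j. \<Omega> $ i $ j / (scale_vec \<Omega> $ i * scale_vec \<Omega> $ j))"

text \<open>The (m+d) x (m+d) block matrix Omega-bar-star = [[Gamma, Delta^T],[Delta, Omega-bar]];
  the index type 'm + 'd puts the m latent coordinates (Inl) first.\<close>
definition Omega_star :: "real^'d^'d \<Rightarrow> real^'m^'d \<Rightarrow> real^'m^'m \<Rightarrow> real^('m + 'd)^('m + 'd)" where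
  "Omega_star \<Omega> \<Delta> \<Gamma> = (\<chi> a b. case a of
       Inl i \<Rightarrow> (case b of Inl j \<Rightarrow> \<Gamma> $ i $ j | Inr l \<Rightarrow> \<Delta> $ l $ i)
     | Inr k \<Rightarrow> (case b of Inl j \<Rightarrow> \<Delta> $ k $ j | Inr l \<Rightarrow> Omega_bar \<Omega> $ k $ l))"

definition SUT_params :: "real^'d^'d \<Rightarrow> real^'m^'d \<Rightarrow> real^'m^'m \<Rightarrow> real \<Rightarrow> bool" where
  "SUT_params \<Omega> \<Delta> \<Gamma> \<nu> \<longleftrightarrow>
     pos_def_mat \<Omega> \<and> corr_mat \<Gamma> \<and> pos_def_mat (Omega_star \<Omega> \<Delta> \<Gamma>) \<and> \<nu> > 0"

text \<open>SUT_{d,m}(xi, Omega, Delta, tau, Gamma, nu): law of xi + omega Z, where Z is U1 conditioned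
  on U0 + tau > 0, with (U0, U1) ~ T_{m+d}(0, Omega-bar-star, nu).\<close>
definition SUT :: "real^'d \<Rightarrow> real^'d^'d \<Rightarrow> real^'m^'d \<Rightarrow> real^'m \<Rightarrow> real^'m^'m \<Rightarrow> real
                    \<Rightarrow> (real^'d) measure" where
  "SUT \<xi> \<Omega> \<Delta> \<tau> \<Gamma> \<nu> =
     distr (uniform_measure (mvt 0 (Omega_star \<Omega> \<Delta> \<Gamma>) \<nu>)
                            {u :: real^('m + 'd). \<forall>i. u $ Inl i + \<tau> $ i > 0})
           borel (\<lambda>u. \<xi> + (\<chi> k. scale_vec \<Omega> $ k * u $ Inr k))"

end

theory Submission
  imports Defs
begin

text \<open>Since \<open>\<Delta>\<close> vanishes on the first \<open>m\<^sub>1\<close> latent coordinates and \<open>\<Gamma>\<close> is block diagonal,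
  the dispersion \<open>\<Omega>*\<close> is block diagonal with blocks \<open>\<Gamma>\<^sub>1\<^sub>1\<close> and the matrix \<open>\<Omega>*\<^sub>2\<close> of the smaller
  model. Split \<open>U = (V, W)\<close> with \<open>V\<close> the first \<open>m\<^sub>1\<close> latent coordinates. The quadratic form of
  the \<open>t\<close> density splits accordingly, so for fixed \<open>W = w\<close> the density in \<open>v\<close> is
  \<open>(s + v\<^sup>T \<Gamma>\<^sub>1\<^sub>1\<^sup>-\<^sup>1 v / \<nu>)\<close> to the power \<open>-p\<close>, where \<open>s = 1 + w\<^sup>T \<Omega>*\<^sub>2\<^sup>-\<^sup>1 w / \<nu>\<close>.
  The positive orthant is a cone, so the substitution \<open>v = \<surd>s v'\<close> maps it onto itself: integrating
  \<open>v\<close> over it gives a constant times \<open>s\<close> to the power \<open>-(\<nu> + m\<^sub>2 + d) / 2\<close>, which is a constant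
  times the \<open>t\<close> density of \<open>W\<close>. Hence conditioning on \<open>V > 0\<close> (recall \<open>\<tau>\<^sub>1 = 0\<close>) leaves the
  law of \<open>W\<close> unchanged, and the remaining conditioning and \<open>Y = \<xi> + \<omega> U\<^sub>1\<close> only involve \<open>W\<close>.\<close>

section \<open>Positive quadratic forms\<close>

definition pos_quad_form :: "real^'n^'n \<Rightarrow> bool" where
  "pos_quad_form A \<longleftrightarrow> (\<forall>x. x \<noteq> 0 \<longrightarrow> x \<bullet> (A *v x) > 0)"

lemma pos_def_mat_imp_pos_quad_form: "pos_def_mat A \<Longrightarrow> pos_quad_form A"
  by (simp add: pos_def_mat_def pos_quad_form_def)

lemma quad_form_nonneg: "pos_quad_form A \<Longrightarrow> x \<bullet> (A *v x) \<ge> 0"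
  by (cases "x = 0") (auto simp: pos_quad_form_def less_imp_le)

lemma quad_form_scaleR: "(c *\<^sub>R x) \<bullet> (A *v (c *\<^sub>R x)) = c\<^sup>2 * (x \<bullet> (A *v (x::real^'n)))"
  by (simp add: matrix_vector_mult_scaleR power2_eq_square)

lemma continuous_on_quad_form: "continuous_on S (\<lambda>x::real^'n. x \<bullet> (A *v x))"
  by (intro continuous_intros linear_continuous_on linear_conv_bounded_linear[THEN iffD1]
      matrix_vector_mul_linear)

lemma borel_measurable_quad_form [measurable]:
  fixes f :: "'a \<Rightarrow> real^'n"
  shows "f \<in> borel_measurable M \<Longrightarrow> (\<lambda>x. f x \<bullet> (A *v f x)) \<in> borel_measurable M"
  using measurable_compose[OF _ borel_measurable_continuous_onI[OF continuous_on_quad_form]] .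

lemma pos_quad_form_invertible:
  assumes "pos_quad_form A"
  shows "invertible A"
proof -
  have "\<forall>x. A *v x = 0 \<longrightarrow> x = 0"
    using assms unfolding pos_quad_form_def by (metis inner_zero_right less_irrefl)
  then show ?thesis
    by (simp add: invertible_left_inverse matrix_left_invertible_ker)
qed

lemma matrix_inv_cancel:
  assumes "invertible A"
  shows "A *v (matrix_inv A *v x) = x" and "matrix_inv A *v (A *v x) = x"
proof -
  have "A ** matrix_inv A = mat 1 \<and> matrix_inv A ** A = mat 1"
    using assms unfolding invertible_def matrix_inv_def by (rule someI_ex)
  then show "A *v (matrix_inv A *v x) = x" and "matrix_inv A *v (A *v x) = x"
    by (simp_all add: matrix_vector_mul_assoc)
qed

lemma pos_quad_form_matrix_inv:
  fixes A :: "real^'n^'n"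
  assumes "pos_quad_form A"
  shows "pos_quad_form (matrix_inv A)"
  unfolding pos_quad_form_def
proof (intro allI impI)
  fix x :: "real^'n"
  assume "x \<noteq> 0"
  define y where "y = matrix_inv A *v x"
  have x: "x = A *v y"
    using matrix_inv_cancel(1)[OF pos_quad_form_invertible[OF assms]] by (simp add: y_def)
  with \<open>x \<noteq> 0\<close> have "y \<bullet> (A *v y) > 0"
    using assms by (metis matrix_vector_mult_0_right pos_quad_form_def)
  then show "x \<bullet> (matrix_inv A *v x) > 0"
    by (simp add: y_def[symmetric] x[symmetric] inner_commute)
qed

lemma pos_quad_form_coercive:
  fixes A :: "real^'n^'n"
  assumes "pos_quad_form A"
  obtains c where "c > 0" and "\<And>x. x \<bullet> (A *v x) \<ge> c * (norm x)\<^sup>2"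
proof -
  have "sphere (0::real^'n) 1 \<noteq> {}"
    using vector_choose_size[of 1] by auto
  then obtain z where z: "z \<in> sphere 0 1"
    and z_min: "\<And>y. y \<in> sphere 0 1 \<Longrightarrow> z \<bullet> (A *v z) \<le> y \<bullet> (A *v y)"
    using continuous_attains_inf[OF compact_sphere _ continuous_on_quad_form] by blast
  have "x \<bullet> (A *v x) \<ge> (z \<bullet> (A *v z)) * (norm x)\<^sup>2" for x :: "real^'n"
  proof (cases "x = 0")
    case False
    have "z \<bullet> (A *v z) \<le> ((1 / norm x) *\<^sub>R x) \<bullet> (A *v ((1 / norm x) *\<^sub>R x))"
      using False by (intro z_min) simp
    also have "\<dots> = (x \<bullet> (A *v x)) / (norm x)\<^sup>2"
      unfolding quad_form_scaleR by (simp add: power_divide)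
    finally show ?thesis
      using False by (simp add: le_divide_eq)
  qed simp
  moreover have "z \<bullet> (A *v z) > 0"
    using z assms by (metis mem_sphere_0 norm_zero zero_neq_one pos_quad_form_def)
  ultimately show ?thesis
    using that by blast
qed

text \<open>The path \<open>t A + (1 - t) I\<close> joins \<open>I\<close> to \<open>A\<close> through matrices with positive quadratic
  form, hence through invertible matrices, so the determinant cannot change sign along it.\<close>
lemma pos_quad_form_det_pos:
  fixes A :: "real^'n^'n"
  assumes "pos_quad_form A"
  shows "det A > 0"
proof -
  define M where "M t = t *\<^sub>R A + (1 - t) *\<^sub>R mat 1" for t :: real
  have M_mult: "M t *v x = t *\<^sub>R (A *v x) + (1 - t) *\<^sub>R x" for t x
    by (simp add: M_def matrix_vector_mult_add_rdistrib scaleR_matrix_vector_assoc[symmetric])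
  have "det (M t) \<noteq> 0" if "t \<in> {0..1}" for t
  proof -
    have "pos_quad_form (M t)"
      unfolding pos_quad_form_def
    proof (intro allI impI)
      fix x :: "real^'n"
      assume "x \<noteq> 0"
      then have "x \<bullet> (A *v x) > 0" "x \<bullet> x > 0"
        using assms by (auto simp: pos_quad_form_def)
      then show "x \<bullet> (M t *v x) > 0"
        using that by (cases "t = 0") (auto simp: M_mult inner_add_right
            intro: add_pos_nonneg add_nonneg_pos)
    qed
    then show ?thesis
      using pos_quad_form_invertible invertible_det_nz by blast
  qed
  moreover have "continuous_on {0..1} (\<lambda>t. det (M t))"
    unfolding det_def M_def by (simp only: vector_add_component vector_scaleR_component)
      (intro continuous_intros)
  moreover have "det (M 0) = 1" and "M 1 = A"
    by (simp_all add: M_def vec_eq_iff)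
  ultimately show ?thesis
    using IVT2'[of "\<lambda>t. det (M t)" 1 0 0] by (cases "det A > 0") auto
qed

section \<open>Integrability of Student \<open>t\<close> kernels\<close>

lemma nn_integral_powr_atLeast_1_finite:
  fixes e :: real
  assumes "e < -1"
  shows "(\<integral>\<^sup>+x. ennreal (indicator {1..} x * x powr e) \<partial>lborel) < \<infinity>"
proof -
  have "((\<lambda>x. x powr e) has_integral -(1 powr (e + 1)) / (e + 1)) {1..}"
    using assms by (intro has_integral_powr_to_inf) simp_all
  then have "((\<lambda>x. indicator {1..} x * x powr e) has_integral -(1 powr (e + 1)) / (e + 1)) UNIV"
  proof -
    have "(\<lambda>x. indicator {1..} x * x powr e) = (\<lambda>x. if x \<in> {1..} then x powr e else 0)"
      by (auto simp: indicator_def fun_eq_iff)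
    then show ?thesis
      using \<open>((\<lambda>x. x powr e) has_integral _) {1..}\<close> by (simp only: has_integral_restrict_UNIV)
  qed
  then have "(\<integral>\<^sup>+x. ennreal (indicator {1..} x * x powr e) \<partial>lborel)
      = ennreal (-(1 powr (e + 1)) / (e + 1))"
    by (intro nn_integral_has_integral_lborel) auto
  then show ?thesis
    by simp
qed

lemma one_plus_square_powr_le:
  fixes c q y :: real
  assumes "c > 0" and "q \<ge> 0" and "y \<ge> 1"
  shows "(1 + c * y\<^sup>2) powr (-q) \<le> c powr (-q) * y powr (-2 * q)"
proof -
  have "(1 + c * y\<^sup>2) powr (-q) \<le> (c * y\<^sup>2) powr (-q)"
    using assms by (intro powr_mono2') auto
  also have "\<dots> = c powr (-q) * (y powr 2) powr (-q)"
    using assms by (simp add: powr_mult powr_realpow)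
  also have "\<dots> = c powr (-q) * y powr (-2 * q)"
    by (simp add: powr_powr)
  finally show ?thesis .
qed

lemma nn_integral_one_plus_square_powr_finite:
  fixes c q :: real
  assumes c: "c > 0" and q: "q > 1/2"
  shows "(\<integral>\<^sup>+x. ennreal ((1 + c * x\<^sup>2) powr (-q)) \<partial>lborel) < \<infinity>"
proof -
  have q_nonneg: "q \<ge> 0"
    using q by simp
  define h where "h x = indicator {1..} x * x powr (-2 * q)" for x :: real
  have h_nonneg: "h x \<ge> 0" for x
    by (simp add: h_def)
  have bound: "(1 + c * x\<^sup>2) powr (-q) \<le> indicator {-1..1} x + c powr (-q) * (h x + h (-x))" for x
  proof -
    consider "x \<ge> 1" | "x \<le> -1" | "-1 < x \<and> x < 1"
      by linarith
    then show ?thesis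
    proof cases
      case 1
      then have "h x = x powr (-2 * q)"
        by (simp add: h_def)
      with one_plus_square_powr_le[OF c q_nonneg 1] show ?thesis
        by (smt (verit) h_nonneg indicator_pos_le mult_left_mono powr_ge_zero)
    next
      case 2
      then have "h (-x) = (-x) powr (-2 * q)"
        by (simp add: h_def)
      with one_plus_square_powr_le[OF c q_nonneg, of "-x"] 2 show ?thesis
        by (smt (verit) h_nonneg indicator_pos_le mult_left_mono powr_ge_zero power2_minus)
    next
      case 3
      have "(1 + c * x\<^sup>2) powr (-q) \<le> 1 powr (-q)"
        using c q by (intro powr_mono2') auto
      then have "(1 + c * x\<^sup>2) powr (-q) \<le> indicator {-1..1} x"
        using 3 by simp
      then show ?thesis
        using h_nonneg c by (smt (verit) mult_nonneg_nonneg powr_ge_zero)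
    qed
  qed
  have [measurable]: "h \<in> borel_measurable borel"
    unfolding h_def by measurable
  have h_finite: "(\<integral>\<^sup>+x. ennreal (h x) \<partial>lborel) < \<infinity>"
    unfolding h_def using q by (intro nn_integral_powr_atLeast_1_finite) simp
  have h_reflect: "(\<integral>\<^sup>+x. ennreal (h (-x)) \<partial>lborel) = (\<integral>\<^sup>+x. ennreal (h x) \<partial>lborel)"
  proof -
    have "(\<integral>\<^sup>+x. ennreal (h x) \<partial>lborel) = (\<integral>\<^sup>+x. ennreal (h x) \<partial>distr lborel borel uminus)"
      by (simp add: lborel_distr_uminus)
    also have "\<dots> = (\<integral>\<^sup>+x. ennreal (h (-x)) \<partial>lborel)"
      by (subst nn_integral_distr) auto
    finally show ?thesis
      by simp
  qed
  have "(\<integral>\<^sup>+x. ennreal ((1 + c * x\<^sup>2) powr (-q)) \<partial>lborel)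
     \<le> (\<integral>\<^sup>+x. ennreal (indicator {-1..1} x)
          + ennreal (c powr (-q)) * (ennreal (h x) + ennreal (h (-x))) \<partial>lborel)"
    using bound h_nonneg
    by (intro nn_integral_mono) (simp add: ennreal_plus[symmetric] ennreal_mult[symmetric] del: ennreal_plus)
  also have "\<dots> = 2 + ennreal (c powr (-q))
      * ((\<integral>\<^sup>+x. ennreal (h x) \<partial>lborel) + (\<integral>\<^sup>+x. ennreal (h (-x)) \<partial>lborel))"
    by (simp add: nn_integral_add nn_integral_cmult ennreal_indicator)
  also have "\<dots> < \<infinity>"
    using h_finite unfolding h_reflect by (simp add: ennreal_mult_less_top)
  finally show ?thesis .
qed

text \<open>In dimension \<open>k\<close> the integrand is dominated by the product over the coordinates of the
  one-dimensional integrands with exponent \<open>p / k\<close>, and Fubini applies.\<close>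
lemma nn_integral_one_plus_norm_square_powr_finite:
  fixes c p :: real
  assumes c: "c > 0" and p: "p > real DIM('a::euclidean_space) / 2"
  shows "(\<integral>\<^sup>+v. ennreal ((1 + c * (norm v)\<^sup>2) powr (-p)) \<partial>(lborel::'a measure)) < \<infinity>"
proof -
  define k where "k = real DIM('a)"
  have k: "k > 0" by (simp add: k_def)
  define q where "q = p / k"
  have q: "q > 1/2" using p k by (simp add: q_def k_def field_simps)
  have dominated: "(1 + c * (norm v)\<^sup>2) powr (-p) \<le> (\<Prod>b\<in>Basis. (1 + c * (v \<bullet> b)\<^sup>2) powr (-q))" for v :: 'a
  proof -
    have le: "(\<Prod>b\<in>(Basis::'a set). (1 + c * (v \<bullet> b)\<^sup>2)) \<le> (\<Prod>b\<in>(Basis::'a set). (1 + c * (norm v)\<^sup>2))"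
    proof (intro prod_mono conjI)
      fix b :: 'a assume "b \<in> Basis"
      then have "\<bar>v \<bullet> b\<bar> \<le> norm v" by (rule Basis_le_norm)
      then have "(v \<bullet> b)\<^sup>2 \<le> (norm v)\<^sup>2" by (metis abs_ge_zero power2_abs power_mono)
      then show "1 + c * (v \<bullet> b)\<^sup>2 \<le> 1 + c * (norm v)\<^sup>2" using c by simp
    qed (use c in auto)
    have pos: "0 < (\<Prod>b\<in>(Basis::'a set). (1 + c * (v \<bullet> b)\<^sup>2))"
      using c by (intro prod_pos) (simp add: add_pos_nonneg)
    have "(1 + c * (norm v)\<^sup>2) powr (-p) = ((1 + c * (norm v)\<^sup>2) ^ DIM('a)) powr (-q)"
      using c k by (simp add: powr_realpow[symmetric] powr_powr q_def k_def add_pos_nonneg)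
    also have "\<dots> = (\<Prod>b\<in>(Basis::'a set). (1 + c * (norm v)\<^sup>2)) powr (-q)" by simp
    also have "\<dots> \<le> (\<Prod>b\<in>(Basis::'a set). (1 + c * (v \<bullet> b)\<^sup>2)) powr (-q)"
      using q pos le by (intro powr_mono2') auto
    also have "\<dots> = (\<Prod>b\<in>Basis. (1 + c * (v \<bullet> b)\<^sup>2) powr (-q))" by (rule prod_powr_distrib)
    finally show ?thesis .
  qed
  have "(\<integral>\<^sup>+v. ennreal ((1 + c * (norm v)\<^sup>2) powr (-p)) \<partial>(lborel::'a measure))
     \<le> (\<integral>\<^sup>+v. (\<Prod>b\<in>Basis. ennreal ((1 + c * (v \<bullet> b)\<^sup>2) powr (-q))) \<partial>(lborel::'a measure))"
    using dominated by (intro nn_integral_mono) (simp add: prod_ennreal ennreal_leI)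
  also have "\<dots> = (\<Prod>b\<in>(Basis::'a set). (\<integral>\<^sup>+x. ennreal ((1 + c * x\<^sup>2) powr (-q)) \<partial>lborel))"
    by (rule nn_integral_lborel_prod[where f="\<lambda>b x. ennreal ((1 + c * x\<^sup>2) powr (-q))"]) auto
  also have "\<dots> < \<infinity>"
    using nn_integral_one_plus_square_powr_finite[OF c q]
    by (simp add: less_top[symmetric] power_eq_top_ennreal_iff)
  finally show ?thesis .
qed

section \<open>Integrals over the positive orthant\<close>

definition pos_orthant :: "(real^'n) set" where
  "pos_orthant = {v. \<forall>i. 0 < v $ i}"

lemma open_pos_orthant: "open (pos_orthant :: (real^'n) set)"
proof -
  have "(pos_orthant :: (real^'n) set) = (\<Inter>i. {v. 0 < v $ i})"
    by (auto simp: pos_orthant_def)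
  moreover have "open {v::real^'n. 0 < v $ i}" for i
    by (intro open_Collect_less continuous_intros)
  ultimately show ?thesis
    by (metis finite open_INT)
qed

lemma pos_orthant_borel [measurable]: "(pos_orthant :: (real^'n) set) \<in> sets borel"
  using open_pos_orthant by (rule borel_open)

lemma scaleR_mem_pos_orthant_iff: "c > 0 \<Longrightarrow> c *\<^sub>R v \<in> pos_orthant \<longleftrightarrow> v \<in> pos_orthant"
  by (auto simp: pos_orthant_def zero_less_mult_iff)

lemma emeasure_lborel_box_cart:
  assumes "\<And>i. l $ i \<le> u $ i"
  shows "emeasure lborel (box l (u::real^'n)) = ennreal (\<Prod>i\<in>UNIV. u $ i - l $ i)"
proof -
  have Basis_cart: "(Basis :: (real^'n) set) = range (\<lambda>i. axis i 1)"
    by (auto simp: Basis_vec_def)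
  have "inj (\<lambda>i::'n. axis i (1::real))"
    by (auto simp: axis_eq_axis intro!: injI)
  then show ?thesis
    using assms by (subst emeasure_lborel_box) (auto simp: Basis_cart prod.reindex inner_axis)
qed

lemma emeasure_lborel_pos_orthant: "emeasure lborel (pos_orthant :: (real^'n) set) \<noteq> 0"
proof -
  have "emeasure lborel (box 0 (1::real^'n)) = 1"
    by (subst emeasure_lborel_box_cart) auto
  moreover have "box 0 (1::real^'n) \<subseteq> pos_orthant"
    by (auto simp: mem_box_cart pos_orthant_def)
  ultimately show ?thesis
    by (metis emeasure_mono pos_orthant_borel sets_lborel le_zero_eq zero_neq_one)
qed

definition orthant_integral :: "real^'m^'m \<Rightarrow> real \<Rightarrow> real \<Rightarrow> real \<Rightarrow> ennreal" where
  "orthant_integral A \<nu> p s =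
     (\<integral>\<^sup>+v. ennreal ((s + v \<bullet> (A *v v) / \<nu>) powr (-p)) * indicator pos_orthant v \<partial>lborel)"

text \<open>Substitute \<open>v = \<surd>s w\<close>; the orthant is a cone, so it is mapped onto itself.\<close>
lemma orthant_integral_scale:
  fixes A :: "real^'m^'m"
  assumes s: "s > 0"
  shows "orthant_integral A \<nu> p s = ennreal (s powr (CARD('m) / 2 - p)) * orthant_integral A \<nu> p 1"
proof -
  define c where "c = sqrt s"
  have c: "c > 0" "c\<^sup>2 = s"
    using s by (auto simp: c_def)
  have "\<bar>c\<bar> ^ DIM(real^'m) = (s powr (1/2)) ^ CARD('m)"
    using s by (simp add: c_def powr_half_sqrt)
  also have "\<dots> = s powr (CARD('m) / 2)"
    using s by (simp add: powr_realpow[symmetric] powr_powr)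
  finally have jacobian: "\<bar>c\<bar> ^ DIM(real^'m) = s powr (CARD('m) / 2)" .
  let ?f = "\<lambda>v::real^'m. ennreal ((s + v \<bullet> (A *v v) / \<nu>) powr (-p)) * indicator pos_orthant v"
  have "orthant_integral A \<nu> p s
      = (\<integral>\<^sup>+v. ?f v \<partial>density (distr lborel borel (\<lambda>x. 0 + c *\<^sub>R x)) (\<lambda>_. \<bar>c\<bar> ^ DIM(real^'m)))"
    unfolding orthant_integral_def using lborel_affine[where 'a="real^'m", of c 0] c by simp
  also have "\<dots> = (\<integral>\<^sup>+v. ennreal (\<bar>c\<bar> ^ DIM(real^'m)) * ?f (c *\<^sub>R v) \<partial>lborel)"
    by (subst nn_integral_density) (simp_all add: nn_integral_distr)
  also have "\<dots> = (\<integral>\<^sup>+v. ennreal (s powr (CARD('m) / 2 - p))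
      * (ennreal ((1 + v \<bullet> (A *v v) / \<nu>) powr (-p)) * indicator pos_orthant v) \<partial>lborel)"
  proof (intro nn_integral_cong)
    fix v :: "real^'m"
    have "s + (c *\<^sub>R v) \<bullet> (A *v (c *\<^sub>R v)) / \<nu> = s * (1 + v \<bullet> (A *v v) / \<nu>)"
      unfolding quad_form_scaleR c(2) by (simp add: distrib_left)
    then have "(s + (c *\<^sub>R v) \<bullet> (A *v (c *\<^sub>R v)) / \<nu>) powr (-p)
        = s powr (-p) * (1 + v \<bullet> (A *v v) / \<nu>) powr (-p)"
      by (simp add: powr_mult)
    moreover have "indicator pos_orthant (c *\<^sub>R v) = (indicator pos_orthant v :: ennreal)"
      using scaleR_mem_pos_orthant_iff[OF c(1), of v] by (simp add: indicator_def)
    moreover have "s powr (CARD('m) / 2 - p) = s powr (CARD('m) / 2) * s powr (-p)"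
      by (simp add: powr_add[symmetric])
    ultimately show "ennreal (\<bar>c\<bar> ^ DIM(real^'m)) * ?f (c *\<^sub>R v) = ennreal (s powr (CARD('m) / 2 - p))
        * (ennreal ((1 + v \<bullet> (A *v v) / \<nu>) powr (-p)) * indicator pos_orthant v)"
      unfolding jacobian by (simp only: ennreal_mult powr_ge_zero mult_nonneg_nonneg mult.assoc)
  qed
  also have "\<dots> = ennreal (s powr (CARD('m) / 2 - p)) * orthant_integral A \<nu> p 1"
    unfolding orthant_integral_def by (rule nn_integral_cmult) measurable
  finally show ?thesis .
qed

lemma orthant_integral_finite:
  fixes A :: "real^'m^'m"
  assumes A: "pos_quad_form A" and \<nu>: "\<nu> > 0" and p: "p > CARD('m) / 2"
  shows "orthant_integral A \<nu> p 1 < \<infinity>"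
proof -
  obtain c where c: "c > 0" "\<And>x. x \<bullet> (A *v x) \<ge> c * (norm x)\<^sup>2"
    using pos_quad_form_coercive[OF A] by blast
  have "orthant_integral A \<nu> p 1
      \<le> (\<integral>\<^sup>+v. ennreal ((1 + (c / \<nu>) * (norm v)\<^sup>2) powr (-p)) \<partial>(lborel::(real^'m) measure))"
    unfolding orthant_integral_def
  proof (intro nn_integral_mono)
    fix v :: "real^'m"
    have "(1 + v \<bullet> (A *v v) / \<nu>) powr (-p) \<le> (1 + (c / \<nu>) * (norm v)\<^sup>2) powr (-p)"
      using p c \<nu> c(2)[of v]
      by (intro powr_mono2') (auto simp: add_pos_nonneg divide_right_mono
          intro: order.trans[OF _ less_imp_le[OF p]])
    then show "ennreal ((1 + v \<bullet> (A *v v) / \<nu>) powr (-p)) * indicator pos_orthant v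
        \<le> ennreal ((1 + (c / \<nu>) * (norm v)\<^sup>2) powr (-p))"
      by (simp add: indicator_def ennreal_leI)
  qed
  also have "\<dots> < \<infinity>"
    using p c \<nu> by (intro nn_integral_one_plus_norm_square_powr_finite) auto
  finally show ?thesis .
qed

lemma orthant_integral_pos:
  fixes A :: "real^'m^'m"
  assumes A: "pos_quad_form A" and \<nu>: "\<nu> > 0"
  shows "orthant_integral A \<nu> p 1 > 0"
proof (rule ccontr)
  let ?f = "\<lambda>v::real^'m. ennreal ((1 + v \<bullet> (A *v v) / \<nu>) powr (-p)) * indicator pos_orthant v"
  have "?f v = 0 \<longleftrightarrow> v \<notin> pos_orthant" for v
  proof -
    have "1 + v \<bullet> (A *v v) / \<nu> > 0"
      using quad_form_nonneg[OF A, of v] \<nu> by (simp add: add_pos_nonneg)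
    then show ?thesis
      by (simp add: indicator_def)
  qed
  moreover assume "\<not> orthant_integral A \<nu> p 1 > 0"
  then have "AE v in lborel. ?f v = 0"
    unfolding orthant_integral_def by (subst nn_integral_0_iff_AE[symmetric]) (auto simp: not_gr_zero)
  ultimately have "AE v in lborel. v \<notin> (pos_orthant :: (real^'m) set)"
    by simp
  then show False
    using emeasure_lborel_pos_orthant by (subst (asm) AE_iff_measurable[OF _ refl]) auto
qed

section \<open>Splitting off the first latent block\<close>

lemma sum_UNIV_sum:
  "(\<Sum>k\<in>UNIV. f k) = (\<Sum>i\<in>UNIV. f (Inl i)) + (\<Sum>j\<in>UNIV. f (Inr j))"
  for f :: "'a::finite + 'b::finite \<Rightarrow> 'c::comm_monoid_add"
  by (subst UNIV_Plus_UNIV[symmetric], subst sum.Plus) auto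

lemma prod_UNIV_sum:
  "(\<Prod>k\<in>UNIV. f k) = (\<Prod>i\<in>UNIV. f (Inl i)) * (\<Prod>j\<in>UNIV. f (Inr j))"
  for f :: "'a::finite + 'b::finite \<Rightarrow> 'c::comm_monoid_mult"
  by (subst UNIV_Plus_UNIV[symmetric], subst prod.Plus) auto

definition vec_join :: "(real^'a::finite) \<times> (real^('b::finite + 'c::finite)) \<Rightarrow> real^(('a + 'b) + 'c)" where
  "vec_join p = (\<chi> k. case k of
     Inl (Inl i) \<Rightarrow> fst p $ i | Inl (Inr j) \<Rightarrow> snd p $ Inl j | Inr l \<Rightarrow> snd p $ Inr l)"

definition vec_left :: "real^(('a::finite + 'b::finite) + 'c::finite) \<Rightarrow> real^'a" where
  "vec_left u = (\<chi> i. u $ Inl (Inl i))"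

definition vec_right :: "real^(('a::finite + 'b::finite) + 'c::finite) \<Rightarrow> real^('b + 'c)" where
  "vec_right u = (\<chi> k. case k of Inl j \<Rightarrow> u $ Inl (Inr j) | Inr l \<Rightarrow> u $ Inr l)"

lemma vec_join_nth [simp]:
  "vec_join (x, y) $ Inl (Inl i) = x $ i"
  "vec_join (x, y) $ Inl (Inr j) = y $ Inl j"
  "vec_join (x, y) $ Inr l = y $ Inr l"
  by (simp_all add: vec_join_def)

lemma vec_left_nth [simp]: "vec_left u $ i = u $ Inl (Inl i)"
  by (simp add: vec_left_def)

lemma vec_right_nth [simp]:
  "vec_right u $ Inl j = u $ Inl (Inr j)"
  "vec_right u $ Inr l = u $ Inr l"
  by (simp_all add: vec_right_def)

lemma vec_left_join [simp]: "vec_left (vec_join (x, y)) = x"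
  by (simp add: vec_eq_iff)

lemma vec_right_join [simp]: "vec_right (vec_join (x, y)) = y"
  by (simp add: vec_eq_iff split_sum_all)

lemma vec_join_left_right: "vec_join (vec_left u, vec_right u) = u"
  by (simp add: vec_eq_iff split_sum_all)

lemma vec_join_eq_iff: "vec_join p = vec_join q \<longleftrightarrow> p = q"
  by (metis vec_left_join vec_right_join prod.collapse)

lemma vec_join_eq_0_iff: "vec_join (x, y) = 0 \<longleftrightarrow> x = 0 \<and> y = 0"
  by (simp add: vec_eq_iff split_sum_all)

lemma inner_vec_join: "vec_join (x, y) \<bullet> vec_join (x', y') = x \<bullet> x' + y \<bullet> y'"
  by (simp add: inner_vec_def sum_UNIV_sum)

lemma linear_vec_join: "linear vec_join"
  by (auto intro!: linearI simp: vec_eq_iff split_sum_all)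

lemma linear_vec_left: "linear vec_left"
  by (auto intro!: linearI simp: vec_eq_iff)

lemma linear_vec_right: "linear vec_right"
  by (auto intro!: linearI simp: vec_eq_iff split_sum_all)

lemma borel_measurable_linear: "linear f \<Longrightarrow> f \<in> borel_measurable borel"
  for f :: "'a::euclidean_space \<Rightarrow> 'b::euclidean_space"
  by (intro borel_measurable_continuous_onI linear_continuous_on linear_conv_bounded_linear[THEN iffD1])

lemmas borel_measurable_vec_join [measurable] = borel_measurable_linear[OF linear_vec_join]
  and borel_measurable_vec_left [measurable] = borel_measurable_linear[OF linear_vec_left]
  and borel_measurable_vec_right [measurable] = borel_measurable_linear[OF linear_vec_right]

lemma measurable_vec_join_lborel_pair: "vec_join \<in> lborel \<Otimes>\<^sub>M lborel \<rightarrow>\<^sub>M borel"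
  using borel_measurable_vec_join by (simp add: lborel_prod)

lemma lborel_eq_distr_vec_join:
  "(lborel :: (real^(('a::finite + 'b::finite) + 'c::finite)) measure)
    = distr (lborel \<Otimes>\<^sub>M lborel) borel vec_join"
proof (rule lborel_eqI)
  fix l u :: "real^(('a + 'b) + 'c)"
  assume le_Basis: "\<And>b. b \<in> Basis \<Longrightarrow> l \<bullet> b \<le> u \<bullet> b"
  have le: "l $ k \<le> u $ k" for k
    using le_Basis[of "axis k 1"] by (auto simp: Basis_vec_def inner_axis)
  have "vec_join -` box l u \<inter> space (lborel \<Otimes>\<^sub>M lborel)
      = box (vec_left l) (vec_left u) \<times> box (vec_right l) (vec_right u)"
    by (auto simp: space_pair_measure mem_box_cart split_sum_all)
  then have "emeasure (distr (lborel \<Otimes>\<^sub>M lborel) borel vec_join) (box l u)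
      = emeasure lborel (box (vec_left l) (vec_left u)) * emeasure lborel (box (vec_right l) (vec_right u))"
    by (subst emeasure_distr[OF measurable_vec_join_lborel_pair])
      (simp_all add: lborel.emeasure_pair_measure_Times)
  also have "\<dots> = ennreal (\<Prod>k\<in>UNIV. u $ k - l $ k)"
  proof -
    have "vec_right l $ k \<le> vec_right u $ k" for k
      using le by (cases k) simp_all
    then show ?thesis
      using le by (simp add: emeasure_lborel_box_cart prod_UNIV_sum ennreal_mult[symmetric]
          prod_nonneg mult.assoc)
  qed
  also have "\<dots> = emeasure lborel (box l u)"
    using le by (rule emeasure_lborel_box_cart[symmetric])
  also have "\<dots> = (\<Prod>b\<in>Basis. (u - l) \<bullet> b)"
    using le_Basis by (rule emeasure_lborel_box)
  finally show "emeasure (distr (lborel \<Otimes>\<^sub>M lborel) borel vec_join) (box l u) = (\<Prod>b\<in>Basis. (u - l) \<bullet> b)" .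
qed simp

section \<open>Student \<open>t\<close> laws with block-diagonal dispersion\<close>

definition mvt_const :: "real^'k^'k \<Rightarrow> real \<Rightarrow> real" where
  "mvt_const \<Sigma> \<nu> = Gamma ((\<nu> + real CARD('k)) / 2)
     / (Gamma (\<nu> / 2) * (\<nu> * pi) powr (real CARD('k) / 2) * sqrt (det \<Sigma>))"

lemma mvt_pdf_0:
  "mvt_pdf 0 \<Sigma> \<nu> x = mvt_const \<Sigma> \<nu> * (1 + x \<bullet> (matrix_inv \<Sigma> *v x) / \<nu>) powr (- (\<nu> + real CARD('k)) / 2)"
  for \<Sigma> :: "real^'k^'k"
  by (simp add: mvt_pdf_def mvt_const_def)

lemma mvt_const_pos: "pos_quad_form \<Sigma> \<Longrightarrow> \<nu> > 0 \<Longrightarrow> mvt_const \<Sigma> \<nu> > 0"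
  unfolding mvt_const_def using pos_quad_form_det_pos[of \<Sigma>]
  by (intro divide_pos_pos mult_pos_pos Gamma_real_pos) (auto simp: add_pos_nonneg)

lemma borel_measurable_mvt_pdf [measurable]: "mvt_pdf \<mu> \<Sigma> \<nu> \<in> borel_measurable borel"
  unfolding mvt_pdf_def by measurable

lemma sets_mvt [measurable_cong, simp]: "sets (mvt \<mu> \<Sigma> \<nu>) = sets borel"
  by (simp add: mvt_def)

lemma space_mvt [simp]: "space (mvt \<mu> \<Sigma> \<nu>) = UNIV"
  by (simp add: mvt_def)

lemma emeasure_mvt:
  "B \<in> sets borel \<Longrightarrow> emeasure (mvt \<mu> \<Sigma> \<nu>) B = (\<integral>\<^sup>+x. ennreal (mvt_pdf \<mu> \<Sigma> \<nu> x) * indicator B x \<partial>lborel)"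
  unfolding mvt_def by (subst emeasure_density) auto

context
  fixes S :: "real^(('a::finite + 'b::finite) + 'c::finite)^(('a + 'b) + 'c)"
    and G :: "real^'a^'a" and T :: "real^('b + 'c)^('b + 'c)"
  assumes block_diagonal: "\<And>x y. S *v vec_join (x, y) = vec_join (G *v x, T *v y)"
begin

lemma pos_quad_form_diagonal_blocks:
  assumes "pos_quad_form S"
  shows "pos_quad_form G" and "pos_quad_form T"
  using assms[unfolded pos_quad_form_def, rule_format, of "vec_join (_, 0)"]
    assms[unfolded pos_quad_form_def, rule_format, of "vec_join (0, _)"]
  by (auto simp: pos_quad_form_def block_diagonal inner_vec_join vec_join_eq_0_iff)

lemma quad_form_matrix_inv_block_diagonal:
  assumes "pos_quad_form S"
  shows "vec_join (x, y) \<bullet> (matrix_inv S *v vec_join (x, y))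
    = x \<bullet> (matrix_inv G *v x) + y \<bullet> (matrix_inv T *v y)"
proof -
  note invertible = pos_quad_form_invertible[OF assms]
    pos_quad_form_invertible[OF pos_quad_form_diagonal_blocks(1)[OF assms]]
    pos_quad_form_invertible[OF pos_quad_form_diagonal_blocks(2)[OF assms]]
  define z where "z = matrix_inv S *v vec_join (x, y)"
  have "vec_join (G *v vec_left z, T *v vec_right z) = vec_join (x, y)"
    using matrix_inv_cancel(1)[OF invertible(1)]
    by (simp add: z_def block_diagonal[symmetric] vec_join_left_right)
  then have "vec_left z = matrix_inv G *v x" and "vec_right z = matrix_inv T *v y"
    using matrix_inv_cancel(2)[OF invertible(2)] matrix_inv_cancel(2)[OF invertible(3)]
    by (auto simp: vec_join_eq_iff)
  then show ?thesis
    by (metis inner_vec_join vec_join_left_right z_def)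
qed

text \<open>The inner integral is an orthant integral at level \<open>s = 1 + y\<^sup>T T\<^sup>-\<^sup>1 y / \<nu>\<close>, and its scaling
  in \<open>s\<close> produces exactly the power of \<open>s\<close> in the density of \<open>T\<close>.\<close>
lemma nn_integral_mvt_pdf_pos_orthant:
  assumes S: "pos_quad_form S" and \<nu>: "\<nu> > 0"
  shows "(\<integral>\<^sup>+x. ennreal (mvt_pdf 0 S \<nu> (vec_join (x, y))) * indicator pos_orthant x \<partial>lborel)
    = ennreal (mvt_const S \<nu> / mvt_const T \<nu>)
      * orthant_integral (matrix_inv G) \<nu> ((\<nu> + real CARD(('a + 'b) + 'c)) / 2) 1
      * ennreal (mvt_pdf 0 T \<nu> y)"
proof -
  define p where "p = (\<nu> + real CARD(('a + 'b) + 'c)) / 2"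
  define s where "s = 1 + y \<bullet> (matrix_inv T *v y) / \<nu>"
  have T: "pos_quad_form T"
    using pos_quad_form_diagonal_blocks(2)[OF S] .
  have s: "s > 0"
    unfolding s_def using quad_form_nonneg[OF pos_quad_form_matrix_inv[OF T], of y] \<nu>
    by (simp add: add_pos_nonneg)
  have K: "mvt_const S \<nu> > 0" "mvt_const T \<nu> > 0"
    using mvt_const_pos[OF S \<nu>] mvt_const_pos[OF T \<nu>] .
  have "1 + vec_join (x, y) \<bullet> (matrix_inv S *v vec_join (x, y)) / \<nu> = s + x \<bullet> (matrix_inv G *v x) / \<nu>"
    for x
    by (simp add: quad_form_matrix_inv_block_diagonal[OF S] s_def add_divide_distrib)
  moreover have "- (\<nu> + real CARD(('a + 'b) + 'c)) / 2 = - p"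
    by (simp only: p_def minus_divide_left)
  ultimately have "mvt_pdf 0 S \<nu> (vec_join (x, y)) = mvt_const S \<nu> * (s + x \<bullet> (matrix_inv G *v x) / \<nu>) powr (-p)"
    for x
    by (simp only: mvt_pdf_0)
  then have "(\<integral>\<^sup>+x. ennreal (mvt_pdf 0 S \<nu> (vec_join (x, y))) * indicator pos_orthant x \<partial>lborel)
      = ennreal (mvt_const S \<nu>) * orthant_integral (matrix_inv G) \<nu> p s"
    unfolding orthant_integral_def using K
    by (subst nn_integral_cmult[symmetric]) (auto simp: ennreal_mult mult.assoc)
  also have "\<dots> = ennreal (mvt_const S \<nu>) * ennreal (s powr (- (\<nu> + real CARD('b + 'c)) / 2))
      * orthant_integral (matrix_inv G) \<nu> p 1"
  proof -
    have "real CARD('a) / 2 - p = - (\<nu> + real CARD('b + 'c)) / 2"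
      by (simp add: p_def field_simps)
    then show ?thesis
      unfolding orthant_integral_scale[OF s] by (simp only: mult.assoc)
  qed
  also have "\<dots> = ennreal (mvt_const S \<nu> / mvt_const T \<nu>) * orthant_integral (matrix_inv G) \<nu> p 1
      * ennreal (mvt_pdf 0 T \<nu> y)"
  proof -
    have "ennreal (mvt_const S \<nu>) = ennreal (mvt_const S \<nu> / mvt_const T \<nu>) * ennreal (mvt_const T \<nu>)"
      using K by (simp add: ennreal_mult[symmetric])
    moreover have "mvt_pdf 0 T \<nu> y = mvt_const T \<nu> * s powr (- (\<nu> + real CARD('b + 'c)) / 2)"
      unfolding mvt_pdf_0 s_def ..
    ultimately show ?thesis
      using K by (simp add: ennreal_mult mult_ac)
  qed
  finally show ?thesis
    unfolding p_def .
qed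

lemma emeasure_mvt_pos_orthant_block:
  assumes S: "pos_quad_form S" and \<nu>: "\<nu> > 0"
  obtains c where "0 < c" and "c < \<infinity>"
    and "\<And>B. B \<in> sets borel \<Longrightarrow>
      emeasure (mvt 0 S \<nu>) {u. vec_left u \<in> pos_orthant \<and> vec_right u \<in> B} = c * emeasure (mvt 0 T \<nu>) B"
proof
  define c where "c = ennreal (mvt_const S \<nu> / mvt_const T \<nu>)
      * orthant_integral (matrix_inv G) \<nu> ((\<nu> + real CARD(('a + 'b) + 'c)) / 2) 1"
  have G: "pos_quad_form (matrix_inv G)" and T: "pos_quad_form T"
    using pos_quad_form_matrix_inv pos_quad_form_diagonal_blocks[OF S] by auto
  have "(\<nu> + real CARD(('a + 'b) + 'c)) / 2 > real CARD('a) / 2"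
    using \<nu> by simp
  then show "0 < c" and "c < \<infinity>"
    using mvt_const_pos[OF S \<nu>] mvt_const_pos[OF T \<nu>] orthant_integral_pos[OF G \<nu>]
      orthant_integral_finite[OF G \<nu>]
    by (auto simp: c_def ennreal_mult_less_top ennreal_zero_less_mult_iff)
  fix B :: "(real^('b + 'c)) set"
  assume [measurable]: "B \<in> sets borel"
  let ?f = "\<lambda>u. ennreal (mvt_pdf 0 S \<nu> u) * indicator {u. vec_left u \<in> pos_orthant \<and> vec_right u \<in> B} u"
  have "emeasure (mvt 0 S \<nu>) {u. vec_left u \<in> pos_orthant \<and> vec_right u \<in> B} = (\<integral>\<^sup>+u. ?f u \<partial>lborel)"
    by (simp add: emeasure_mvt)
  also have "\<dots> = (\<integral>\<^sup>+u. ?f u \<partial>distr (lborel \<Otimes>\<^sub>M lborel) borel vec_join)"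
    by (subst (1) lborel_eq_distr_vec_join) (rule refl)
  also have "\<dots> = (\<integral>\<^sup>+z. ?f (vec_join z) \<partial>(lborel \<Otimes>\<^sub>M lborel))"
    by (rule nn_integral_distr[OF measurable_vec_join_lborel_pair]) simp
  also have "\<dots> = (\<integral>\<^sup>+y. (\<integral>\<^sup>+x. ennreal (mvt_pdf 0 S \<nu> (vec_join (x, y))) * indicator pos_orthant x \<partial>lborel)
      * indicator B y \<partial>lborel)"
    by (subst lborel_pair.nn_integral_snd[symmetric])
      (auto intro!: measurable_compose[OF measurable_vec_join_lborel_pair] nn_integral_cong
        nn_integral_multc[symmetric] simp: indicator_def)
  also have "\<dots> = c * emeasure (mvt 0 T \<nu>) B"
    unfolding nn_integral_mvt_pdf_pos_orthant[OF S \<nu>] c_def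
    by (simp add: emeasure_mvt nn_integral_cmult mult.assoc)
  finally show "emeasure (mvt 0 S \<nu>) {u. vec_left u \<in> pos_orthant \<and> vec_right u \<in> B} = c * emeasure (mvt 0 T \<nu>) B" .
qed

end

section \<open>Conditioning\<close>

lemma distr_uniform_measure_eq_if_scaled:
  assumes f [measurable]: "f \<in> M \<rightarrow>\<^sub>M N" and g [measurable]: "g \<in> N \<rightarrow>\<^sub>M K"
    and P [measurable]: "{x \<in> space M. P x} \<in> sets M" and A [measurable]: "A \<in> sets N"
    and c: "0 < c" "c < \<infinity>"
    and scaled: "\<And>B. B \<in> sets N \<Longrightarrow> emeasure M {x \<in> space M. P x \<and> f x \<in> B} = c * emeasure N B"
  shows "distr (uniform_measure M {x \<in> space M. P x \<and> f x \<in> A}) K (\<lambda>x. g (f x))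
    = distr (uniform_measure N A) K g"
proof (rule measure_eqI)
  fix E
  assume "E \<in> sets (distr (uniform_measure M {x \<in> space M. P x \<and> f x \<in> A}) K (\<lambda>x. g (f x)))"
  then have [measurable]: "E \<in> sets K"
    by simp
  have "emeasure (distr (uniform_measure M {x \<in> space M. P x \<and> f x \<in> A}) K (\<lambda>x. g (f x))) E
      = emeasure M ({x \<in> space M. P x \<and> f x \<in> A} \<inter> ((\<lambda>x. g (f x)) -` E \<inter> space M))
        / emeasure M {x \<in> space M. P x \<and> f x \<in> A}"
    by (subst emeasure_distr) (simp_all add: measurable_sets[OF measurable_comp[OF f g]])
  also have "{x \<in> space M. P x \<and> f x \<in> A} \<inter> ((\<lambda>x. g (f x)) -` E \<inter> space M)
      = {x \<in> space M. P x \<and> f x \<in> A \<inter> (g -` E \<inter> space N)}"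
    using measurable_space[OF f] by auto
  also have "emeasure M {x \<in> space M. P x \<and> f x \<in> A \<inter> (g -` E \<inter> space N)} / emeasure M {x \<in> space M. P x \<and> f x \<in> A}
      = c * emeasure N (A \<inter> (g -` E \<inter> space N)) / (c * emeasure N A)"
  proof -
    have "A \<inter> (g -` E \<inter> space N) \<in> sets N"
      by measurable
    then show ?thesis
      by (simp only: scaled A)
  qed
  also have "\<dots> = emeasure (distr (uniform_measure N A) K g) E"
    using c by (simp add: emeasure_distr divide_mult_eq mult.commute[of c])
  finally show "emeasure (distr (uniform_measure M {x \<in> space M. P x \<and> f x \<in> A}) K (\<lambda>x. g (f x))) E
      = emeasure (distr (uniform_measure N A) K g) E" .
qed simp

theorem proposition11:
  fixes \<xi> :: "real^'d" and \<Omega> :: "real^'d^'d"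
    and \<Delta>2 :: "real^'m2^'d" and \<tau>2 :: "real^'m2"
    and \<Gamma>11 :: "real^'m1^'m1" and \<Gamma>22 :: "real^'m2^'m2" and \<nu> :: real
  defines "\<Delta> \<equiv> (\<chi> k a. case a of Inl i \<Rightarrow> 0 | Inr j \<Rightarrow> \<Delta>2 $ k $ j) :: real^('m1 + 'm2)^'d"
    and "\<tau> \<equiv> (\<chi> a. case a of Inl i \<Rightarrow> 0 | Inr j \<Rightarrow> \<tau>2 $ j) :: real^('m1 + 'm2)"
    and "\<Gamma> \<equiv> (\<chi> a b. case a of
              Inl i \<Rightarrow> (case b of Inl j \<Rightarrow> \<Gamma>11 $ i $ j | Inr j \<Rightarrow> 0)
            | Inr i \<Rightarrow> (case b of Inl j \<Rightarrow> 0 | Inr j \<Rightarrow> \<Gamma>22 $ i $ j)) :: real^('m1 + 'm2)^('m1 + 'm2)"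
  assumes "SUT_params \<Omega> \<Delta> \<Gamma> \<nu>"
  shows "SUT \<xi> \<Omega> \<Delta> \<tau> \<Gamma> \<nu> = SUT \<xi> \<Omega> \<Delta>2 \<tau>2 \<Gamma>22 \<nu>"
proof -
  let ?S = "Omega_star \<Omega> \<Delta> \<Gamma>" and ?T = "Omega_star \<Omega> \<Delta>2 \<Gamma>22"
  have block_diagonal: "?S *v vec_join (x, y) = vec_join (\<Gamma>11 *v x, ?T *v y)" for x y
    by (simp add: vec_eq_iff split_sum_all matrix_vector_mult_def sum_UNIV_sum
        Omega_star_def \<Delta>_def \<Gamma>_def)
  have S: "pos_quad_form ?S" and \<nu>: "\<nu> > 0"
    using assms by (auto simp: SUT_params_def pos_def_mat_imp_pos_quad_form)
  obtain c where c: "0 < c" "c < \<infinity>" and scaled: "\<And>B. B \<in> sets borel \<Longrightarrow>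
      emeasure (mvt 0 ?S \<nu>) {u. vec_left u \<in> pos_orthant \<and> vec_right u \<in> B} = c * emeasure (mvt 0 ?T \<nu>) B"
    using emeasure_mvt_pos_orthant_block[OF block_diagonal S \<nu>] by blast
  define Y where "Y = (\<lambda>w :: real^('m2 + 'd). \<xi> + (\<chi> k. scale_vec \<Omega> $ k * w $ Inr k))"
  have "linear (\<lambda>w::real^('m2 + 'd). \<chi> k. scale_vec \<Omega> $ k * w $ Inr k)"
    by (auto intro!: linearI simp: vec_eq_iff algebra_simps)
  then have [measurable]: "Y \<in> borel_measurable borel"
    unfolding Y_def using borel_measurable_linear by measurable
  define A where "A = {w :: real^('m2 + 'd). \<forall>j. w $ Inl j + \<tau>2 $ j > 0}"
  have [measurable]: "A \<in> sets borel"
    unfolding A_def by measurable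
  have "{u. \<forall>a. u $ Inl a + \<tau> $ a > 0}
      = {u \<in> space (mvt 0 ?S \<nu>). vec_left u \<in> pos_orthant \<and> vec_right u \<in> A}"
    by (auto simp: \<tau>_def A_def pos_orthant_def split_sum_all)
  then have "SUT \<xi> \<Omega> \<Delta> \<tau> \<Gamma> \<nu>
      = distr (uniform_measure (mvt 0 ?S \<nu>)
          {u \<in> space (mvt 0 ?S \<nu>). vec_left u \<in> pos_orthant \<and> vec_right u \<in> A})
          borel (\<lambda>u. Y (vec_right u))"
    by (simp add: SUT_def Y_def)
  also have "\<dots> = distr (uniform_measure (mvt 0 ?T \<nu>) A) borel Y"
    using c scaled by (intro distr_uniform_measure_eq_if_scaled) simp_all
  also have "\<dots> = SUT \<xi> \<Omega> \<Delta>2 \<tau>2 \<Gamma>22 \<nu>"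
    by (simp add: SUT_def Y_def A_def)
  finally show ?thesis .
qed

end
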